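(* Let $A$ be a finite group acting by automorphisms on a finite group $G$ such that $\Gamma(G,A)$ contains no triangle. Then for every nonidentity element $x\in G$ there is a prime $p$ such that the order of $x$ divides $p^2$.
   Context: $\Gamma(G,A)$ is the simple graph whose vertices are the $A$-orbits $x^A$ with $x\in G\setminus\{1\}$, two distinct vertices $\mathcal{O},\mathcal{O}'$ being adjacent iff there exist $x\in\mathcal{O}$, $y\in\mathcal{O}'$ with $xy=yx$. A triangle is a set of three distinct pairwise adjacent vertices. *)

theory Defs
  imports "HOL-Algebra.Algebra"
begin

definition acts_by_automorphisms ::
  "('b, 'c) monoid_scheme \<Rightarrow> ('a, 'd) monoid_scheme \<Rightarrow> ('b \<Rightarrow> 'a \<Rightarrow> 'a) \<Rightarrow> bool" where
  "acts_by_automorphisms A G phi \<longleftrightarrow> group A \<and> group G \<and> phi \<in> hom A (AutoGroup G)"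

definition A_orbit ::
  "('b, 'c) monoid_scheme \<Rightarrow> ('b \<Rightarrow> 'a \<Rightarrow> 'a) \<Rightarrow> 'a \<Rightarrow> 'a set" where
  "A_orbit A phi x = {phi a x | a. a \<in> carrier A}"

definition Gamma_vertices ::
  "('a, 'd) monoid_scheme \<Rightarrow> ('b, 'c) monoid_scheme \<Rightarrow> ('b \<Rightarrow> 'a \<Rightarrow> 'a) \<Rightarrow> 'a set set" where
  "Gamma_vertices G A phi = {A_orbit A phi x | x. x \<in> carrier G \<and> x \<noteq> \<one>\<^bsub>G\<^esub>}"

definition Gamma_adj ::
  "('a, 'd) monoid_scheme \<Rightarrow> ('b, 'c) monoid_scheme \<Rightarrow> ('b \<Rightarrow> 'a \<Rightarrow> 'a) \<Rightarrow> 'a set \<Rightarrow> 'a set \<Rightarrow> bool" where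
  "Gamma_adj G A phi O1 O2 \<longleftrightarrow>
     O1 \<in> Gamma_vertices G A phi \<and> O2 \<in> Gamma_vertices G A phi \<and> O1 \<noteq> O2 \<and>
     (\<exists>x\<in>O1. \<exists>y\<in>O2. x \<otimes>\<^bsub>G\<^esub> y = y \<otimes>\<^bsub>G\<^esub> x)"

definition Gamma_has_triangle ::
  "('a, 'd) monoid_scheme \<Rightarrow> ('b, 'c) monoid_scheme \<Rightarrow> ('b \<Rightarrow> 'a \<Rightarrow> 'a) \<Rightarrow> bool" where
  "Gamma_has_triangle G A phi \<longleftrightarrow>
     (\<exists>O1 O2 O3. O1 \<noteq> O2 \<and> O1 \<noteq> O3 \<and> O2 \<noteq> O3 \<and>
        Gamma_adj G A phi O1 O2 \<and> Gamma_adj G A phi O1 O3 \<and> Gamma_adj G A phi O2 O3)"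

end

theory Submission
  imports Defs
begin

text \<open>Automorphisms preserve element orders, so all elements of an orbit have the same order,
and orbits of elements of different orders are different vertices. If the order n of x had two
distinct divisors d, e with 1 < d, e < n, the powers of x of orders d, e and n would commute
pairwise, so their orbits would form a triangle. Hence n has no such pair of divisors, which for
n > 1 means that n is a prime or the square of a prime.\<close>

lemma two_proper_divisors_if_not_dvd_prime_square:
  fixes n :: nat
  assumes "n > 1" and "\<forall>p. Factorial_Ring.prime p \<longrightarrow> \<not> n dvd p ^ 2"
  obtains d e where "d dvd n" "e dvd n" "1 < d" "1 < e" "d \<noteq> e" "d \<noteq> n" "e \<noteq> n"
proof -
  obtain p where p: "Factorial_Ring.prime p" "p dvd n"
    using \<open>n > 1\<close> prime_factor_nat by (metis less_irrefl)
  define m where "m = n div p"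
  have n_eq: "n = p * m"
    using p(2) by (simp add: m_def)
  have "p > 1"
    using prime_gt_1_nat[OF p(1)] .
  have "\<not> n dvd p ^ 2"
    using assms(2) p(1) by blast
  then have "m \<noteq> 1" "m \<noteq> p"
    using n_eq by (auto simp: power2_eq_square)
  moreover have "m \<noteq> 0"
    using n_eq \<open>n > 1\<close> by (metis mult_0_right not_one_less_zero)
  ultimately have "m > 1"
    by simp
  then have "p \<noteq> n" "m \<noteq> n"
    using n_eq \<open>p > 1\<close> by simp_all
  then show thesis
    using that[of p m] p(2) n_eq \<open>p > 1\<close> \<open>m > 1\<close> \<open>m \<noteq> p\<close> by auto
qed

lemma (in group_hom) ord_hom_inj:
  assumes "inj_on h (carrier G)" "x \<in> carrier G"
  shows "H.ord (h x) = G.ord x"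
proof -
  have "h x [^]\<^bsub>H\<^esub> k = \<one>\<^bsub>H\<^esub> \<longleftrightarrow> x [^] k = \<one>" for k :: nat
  proof -
    have "h x [^]\<^bsub>H\<^esub> k = h (x [^] k)"
      using assms(2) by (simp add: hom_nat_pow)
    then show ?thesis
      using inj_on_eq_iff[OF assms(1) G.nat_pow_closed[OF assms(2)] G.one_closed, of k] by simp
  qed
  then show ?thesis
    using assms(2) by (simp add: H.ord_unique G.pow_eq_id)
qed

lemma (in group) ord_pow_div:
  assumes "x \<in> carrier G" "ord x \<noteq> 0" "d dvd ord x"
  shows "ord (x [^] (ord x div d)) = d"
proof -
  obtain k where k: "ord x = d * k"
    using assms(3) by blast
  then have "d \<noteq> 0" "k \<noteq> 0"
    using assms(2) by auto
  then show ?thesis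
    using assms(1) k by (simp add: ord_pow)
qed

locale aut_action = A: group A + G: group G
  for A :: "('b, 'c) monoid_scheme" and G :: "('a, 'd) monoid_scheme"
    and phi :: "'b \<Rightarrow> 'a \<Rightarrow> 'a" +
  assumes phi_hom: "phi \<in> hom A (AutoGroup G)"

lemma aut_actionI: "acts_by_automorphisms A G phi \<Longrightarrow> aut_action A G phi"
  by (simp add: acts_by_automorphisms_def aut_action_def aut_action_axioms_def)

context aut_action
begin

lemma phi_auto: "a \<in> carrier A \<Longrightarrow> phi a \<in> auto G"
  using phi_hom by (auto simp: hom_def AutoGroup_def)

lemma phi_one: "y \<in> carrier G \<Longrightarrow> phi \<one>\<^bsub>A\<^esub> y = y"
  using hom_one[OF phi_hom A.group_axioms G.AutoGroup]
  by (simp add: AutoGroup_def BijGroup_def)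

lemma mem_A_orbit_self: "y \<in> carrier G \<Longrightarrow> y \<in> A_orbit A phi y"
  unfolding A_orbit_def using phi_one by force

lemma ord_mem_A_orbit:
  assumes "y \<in> carrier G" "z \<in> A_orbit A phi y"
  shows "G.ord z = G.ord y"
proof -
  obtain a where a: "a \<in> carrier A" "z = phi a y"
    using assms(2) unfolding A_orbit_def by blast
  have "group_hom G G (phi a)" "inj_on (phi a) (carrier G)"
    using phi_auto[OF a(1)] G.group_axioms
    by (auto simp: auto_def Bij_def bij_betw_def group_hom_def group_hom_axioms_def)
  then show ?thesis
    using a(2) assms(1) by (simp add: group_hom.ord_hom_inj)
qed

lemma A_orbit_neq_if_ord_neq:
  assumes "y \<in> carrier G" "z \<in> carrier G" "G.ord y \<noteq> G.ord z"
  shows "A_orbit A phi y \<noteq> A_orbit A phi z"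
  using assms mem_A_orbit_self ord_mem_A_orbit by metis

lemma Gamma_adj_A_orbits:
  assumes "y \<in> carrier G" "z \<in> carrier G" "y \<noteq> \<one>\<^bsub>G\<^esub>" "z \<noteq> \<one>\<^bsub>G\<^esub>"
    and "y \<otimes>\<^bsub>G\<^esub> z = z \<otimes>\<^bsub>G\<^esub> y" and "G.ord y \<noteq> G.ord z"
  shows "Gamma_adj G A phi (A_orbit A phi y) (A_orbit A phi z)"
  unfolding Gamma_adj_def Gamma_vertices_def
  using assms A_orbit_neq_if_ord_neq mem_A_orbit_self by blast

lemma Gamma_has_triangle_if_commuting:
  assumes "y1 \<in> carrier G" "y2 \<in> carrier G" "y3 \<in> carrier G"
    and "y1 \<noteq> \<one>\<^bsub>G\<^esub>" "y2 \<noteq> \<one>\<^bsub>G\<^esub>" "y3 \<noteq> \<one>\<^bsub>G\<^esub>"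
    and "y1 \<otimes>\<^bsub>G\<^esub> y2 = y2 \<otimes>\<^bsub>G\<^esub> y1" "y1 \<otimes>\<^bsub>G\<^esub> y3 = y3 \<otimes>\<^bsub>G\<^esub> y1"
      "y2 \<otimes>\<^bsub>G\<^esub> y3 = y3 \<otimes>\<^bsub>G\<^esub> y2"
    and "G.ord y1 \<noteq> G.ord y2" "G.ord y1 \<noteq> G.ord y3" "G.ord y2 \<noteq> G.ord y3"
  shows "Gamma_has_triangle G A phi"
  unfolding Gamma_has_triangle_def
  using assms Gamma_adj_A_orbits A_orbit_neq_if_ord_neq by metis

end

theorem lemma5p1:
  fixes G :: "('a, 'd) monoid_scheme" and A :: "('b, 'c) monoid_scheme"
    and phi :: "'b \<Rightarrow> 'a \<Rightarrow> 'a"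
  assumes "group G" and "finite (carrier G)"
    and "group A" and "finite (carrier A)"
    and "acts_by_automorphisms A G phi"
    and "\<not> Gamma_has_triangle G A phi"
    and "x \<in> carrier G" and "x \<noteq> \<one>\<^bsub>G\<^esub>"
  shows "\<exists>p::nat. Factorial_Ring.prime p \<and> group.ord G x dvd p ^ 2"
proof (rule ccontr)
  assume no_prime: "\<not> ?thesis"
  interpret aut_action A G phi
    using assms(5) by (rule aut_actionI)
  define n where "n = G.ord x"
  have "n > 1"
    using G.ord_ge_1[OF assms(2,7)] G.ord_eq_1[OF assms(7)] assms(8) by (simp add: n_def)
  then obtain d e where de: "d dvd n" "e dvd n" "1 < d" "1 < e" "d \<noteq> e" "d \<noteq> n" "e \<noteq> n"
    using two_proper_divisors_if_not_dvd_prime_square no_prime n_def by blast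
  define y where "y k = x [^]\<^bsub>G\<^esub> (n div k)" for k
  have y_carrier: "y k \<in> carrier G" for k
    using assms(7) by (simp add: y_def)
  have ord_y: "G.ord (y k) = k" if "k dvd n" for k
    using G.ord_pow_div[OF assms(7)] \<open>n > 1\<close> that by (simp add: y_def n_def)
  have y_ne_one: "y k \<noteq> \<one>\<^bsub>G\<^esub>" if "k dvd n" "1 < k" for k
    using that ord_y G.ord_eq_1[OF y_carrier] by force
  have y_comm: "y k \<otimes>\<^bsub>G\<^esub> y l = y l \<otimes>\<^bsub>G\<^esub> y k" for k l
    using assms(7) by (simp add: y_def G.nat_pow_mult add.commute)
  have "Gamma_has_triangle G A phi"
    using Gamma_has_triangle_if_commuting[OF y_carrier y_carrier y_carrier
        y_ne_one[OF de(1,3)] y_ne_one[OF de(2,4)] y_ne_one[OF dvd_refl \<open>n > 1\<close>]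
        y_comm y_comm y_comm]
      ord_y[OF de(1)] ord_y[OF de(2)] ord_y[OF dvd_refl] de(5-7)
    by simp
  with assms(6) show False by contradiction
qed

end
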